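(* Let $S$ be a string of length $n$ over a totally ordered alphabet, with Lyndon array $\lambda$, and let $(i,j,p)$ be a decreasing run in $S$. Then there is exactly one index $i_0\in[i,i+p)$ such that $\lambda[i_0]=p$.
   Context: For $i\in[1,n+1]$, $S_i=S[i..n]$ is the suffix starting at $i$ ($S_{n+1}$ empty); $\prec$ is the lexicographical order induced by the alphabet order. A positive integer $p$ is a period of a nonempty substring $S[i..j]$ if $S[x]=S[x+p]$ for all $x\in[i,j-p]$. A run is a triple $(i,j,p)$ with $1\le i\le j\le n$ such that $p$ is the smallest period of $S[i..j]$, $j-i+1\ge 2p$, and neither $(i-1,j,p)$ (when $i>1$) nor $(i,j+1,p)$ (when $j<n$) satisfies these two properties. A run $(i,j,p)$ is decreasing if $S_i\succ S_{i+p}$. A Lyndon word is a nonempty string that is strictly lexicographically smaller than all of its non-trivial cyclic shifts. The Lyndon array is defined by $\lambda[i]=\max\{j-i+1 \mid j\in[i,n],\ S[i..j] \text{ is a Lyndon word}\}$ for $i\in[1,n]$. *)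

theory Defs
  imports Main
begin

text \<open>Strings are lists over a linearly ordered alphabet; positions are 1-based.\<close>

definition chr :: "'a list \<Rightarrow> nat \<Rightarrow> 'a" where
  "chr S x = S ! (x - 1)"

definition substr :: "'a list \<Rightarrow> nat \<Rightarrow> nat \<Rightarrow> 'a list" where
  "substr S i j = take (Suc j - i) (drop (i - 1) S)"

definition suffix_at :: "'a list \<Rightarrow> nat \<Rightarrow> 'a list" where
  "suffix_at S i = drop (i - 1) S"

definition lex_less :: "'a::linorder list \<Rightarrow> 'a list \<Rightarrow> bool" where
  "lex_less u v = lexordp (<) u v"

definition is_period :: "'a list \<Rightarrow> nat \<Rightarrow> nat \<Rightarrow> nat \<Rightarrow> bool" where
  "is_period S i j p \<longleftrightarrow> 0 < p \<and> (\<forall>x. i \<le> x \<and> x + p \<le> j \<longrightarrow> chr S x = chr S (x + p))"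

definition smallest_period :: "'a list \<Rightarrow> nat \<Rightarrow> nat \<Rightarrow> nat \<Rightarrow> bool" where
  "smallest_period S i j p \<longleftrightarrow> is_period S i j p \<and> (\<forall>q. 0 < q \<and> q < p \<longrightarrow> \<not> is_period S i j q)"

definition run_props :: "'a list \<Rightarrow> nat \<Rightarrow> nat \<Rightarrow> nat \<Rightarrow> bool" where
  "run_props S i j p \<longleftrightarrow> smallest_period S i j p \<and> 2 * p \<le> j - i + 1"

definition is_run :: "'a list \<Rightarrow> nat \<Rightarrow> nat \<Rightarrow> nat \<Rightarrow> bool" where
  "is_run S i j p \<longleftrightarrow> 1 \<le> i \<and> i \<le> j \<and> j \<le> length S \<and> run_props S i j p
     \<and> (i > 1 \<longrightarrow> \<not> run_props S (i - 1) j p)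
     \<and> (j < length S \<longrightarrow> \<not> run_props S i (j + 1) p)"

definition decreasing_run :: "'a::linorder list \<Rightarrow> nat \<Rightarrow> nat \<Rightarrow> nat \<Rightarrow> bool" where
  "decreasing_run S i j p \<longleftrightarrow> is_run S i j p \<and> lex_less (suffix_at S (i + p)) (suffix_at S i)"

definition lyndon :: "'a::linorder list \<Rightarrow> bool" where
  "lyndon w \<longleftrightarrow> w \<noteq> [] \<and> (\<forall>k. 0 < k \<and> k < length w \<longrightarrow> lex_less w (rotate k w))"

definition lyndon_array :: "'a::linorder list \<Rightarrow> nat \<Rightarrow> nat" where
  "lyndon_array S i = Max {j - i + 1 | j. i \<le> j \<and> j \<le> length S \<and> lyndon (substr S i j)}"

end

theory Submission
  imports Defs "HOL-Library.List_Lexorder"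
begin

(* Let u = S[i..i+p-1]. The factors of length p starting in [i, i+p) are the rotations of u,
   and u is primitive because p is the smallest period, so exactly one of them, the least
   rotation, is a Lyndon word. No longer factor S[k..m] with k in [i, i+p) is Lyndon: the run
   is decreasing, so by periodicity the suffix S_(k+p) is smaller than S_k, which makes the
   proper suffix S[k+p..m] smaller than S[k..m], whereas a Lyndon word is smaller than all of
   its proper suffixes. Hence lambda[k] = p exactly at the start of the Lyndon rotation. *)

lemma lex_less_iff_less: "lex_less u v \<longleftrightarrow> u < v"
  by (simp add: lex_less_def List.lexordp_def list_less_def)

lemma less_list_iff_lexordp: "(xs::'a::linorder list) < ys \<longleftrightarrow> ord_class.lexordp xs ys"
  by (simp add: lexordp_conv_lexord list_less_def)

lemma less_append_self: "ys \<noteq> [] \<Longrightarrow> (xs::'a::linorder list) < xs @ ys"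
  unfolding less_list_iff_lexordp by (rule lexordp_append_rightI)

lemma append_less_append_cancel: "(v::'a::linorder list) @ xs < v @ ys \<Longrightarrow> xs < ys"
  unfolding less_list_iff_lexordp by (rule lexordp_append_leftD) auto

lemma less_append_mismatch: "(a::'a::linorder) < b \<Longrightarrow> us @ a # xs < us @ b # ys"
  unfolding less_list_iff_lexordp by (rule lexordp_append_left_rightI)

lemma less_list_cases:
  fixes xs ys :: "'a::linorder list"
  assumes "xs < ys"
  obtains (prefix) z zs where "ys = xs @ z # zs"
    | (mismatch) us a b vs ws where "a < b" "xs = us @ a # vs" "ys = us @ b # ws"
  using assms unfolding less_list_iff_lexordp lexordp_iff by blast

lemma append_less_imp_le:
  fixes x t a b :: "'a::linorder list"
  assumes "length x = length t" "x @ a < t @ b"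
  shows "x \<le> t"
proof (rule ccontr)
  assume "\<not> x \<le> t"
  then have "t < x" by auto
  then obtain us c d vs ws where "c < d" "t = us @ c # vs" "x = us @ d # ws"
    using assms(1) by (cases rule: less_list_cases) auto
  then have "t @ b < x @ a" using less_append_mismatch by fastforce
  then show False using assms(2) by auto
qed

lemma take_less_take:
  fixes xs ys :: "'a::linorder list"
  assumes "xs < ys" "a < b" "b \<le> length ys"
  shows "take a xs < take b ys"
proof -
  have take_less: "take c ys < take b ys" if "c < b" for c
  proof -
    have "take b ys = take c ys @ take (b - c) (drop c ys)"
      using that by (metis add_diff_inverse_nat less_imp_not_less take_add)
    moreover have "take (b - c) (drop c ys) \<noteq> []" using that assms(3) by simp
    ultimately show ?thesis by (metis less_append_self)
  qed
  from assms(1) show ?thesis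
  proof (cases rule: less_list_cases)
    case (prefix z zs)
    then have "take a xs = take (min a (length xs)) ys" by (simp add: min_def)
    moreover have "min a (length xs) < b" using assms(2) by linarith
    ultimately show ?thesis using take_less by metis
  next
    case (mismatch us c d vs ws)
    show ?thesis
    proof (cases "a \<le> length us")
      case True
      then have "take a xs = take a ys" using mismatch by simp
      then show ?thesis using take_less assms(2) by metis
    next
      case False
      then have "take a xs = us @ c # take (a - length us - 1) vs"
        and "take b ys = us @ d # take (b - length us - 1) ws"
        using mismatch assms(2) by (simp_all add: take_Cons')
      then show ?thesis using less_append_mismatch mismatch(1) by metis
    qed
  qed
qed

lemma lyndon_less_rotate: "lyndon w \<Longrightarrow> 0 < k \<Longrightarrow> k < length w \<Longrightarrow> w < rotate k w"
  unfolding lyndon_def lex_less_iff_less by blast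

lemma lyndon_less_swap:
  "lyndon (x @ v) \<Longrightarrow> x \<noteq> [] \<Longrightarrow> v \<noteq> [] \<Longrightarrow> x @ v < v @ x"
  using lyndon_less_rotate[of "x @ v" "length x"] by (simp add: rotate_append)

lemma lyndon_less_proper_suffix:
  fixes x v :: "'a::linorder list"
  assumes lyndon: "lyndon (x @ v)" and "x \<noteq> []" "v \<noteq> []"
  shows "x @ v < v"
proof (rule ccontr)
  assume "\<not> x @ v < v"
  moreover have "x @ v \<noteq> v" using \<open>x \<noteq> []\<close> by simp
  ultimately have "v < x @ v" by (metis not_less_iff_gr_or_eq)
  moreover have swap: "x @ v < v @ x" using lyndon_less_swap assms .
  ultimately obtain t where t: "x @ v = v @ t"
  proof (cases rule: less_list_cases)
    case (mismatch us a b vs ws)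
    then have "v @ x < x @ v" using less_append_mismatch by fastforce
    then show ?thesis using swap by auto
  qed auto
  then have "length t = length x" by (metis add_left_imp_eq length_append add.commute)
  then have "t \<noteq> []" using \<open>x \<noteq> []\<close> by auto
  then have "x @ v < t @ v" using lyndon_less_swap[of v t] lyndon t \<open>v \<noteq> []\<close> by simp
  then have "x \<le> t" using \<open>length t = length x\<close> by (simp add: append_less_imp_le)
  moreover have "t < x" using swap t by (simp add: append_less_append_cancel)
  ultimately show False by simp
qed

lemma rotate_add_length: "rotate (length w + k) w = rotate k w"
  by (metis mod_add_self1 rotate_conv_mod)

lemma lyndon_rotate_unique:
  fixes w :: "'a::linorder list"
  assumes "a < length w" "b < length w" "lyndon (rotate a w)" "lyndon (rotate b w)"
  shows "a = b"
proof -
  have False if "a < b" "b < length w" "lyndon (rotate a w)" "lyndon (rotate b w)" for a b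
  proof -
    have "rotate a w < rotate (b - a) (rotate a w)"
      using that by (intro lyndon_less_rotate) auto
    also have "\<dots> = rotate b w" using that by (simp add: rotate_rotate)
    also have "\<dots> < rotate (length w - (b - a)) (rotate b w)"
      using that by (intro lyndon_less_rotate) auto
    also have "\<dots> = rotate a w" using that by (simp add: rotate_rotate rotate_add_length)
    finally show False by simp
  qed
  then show ?thesis using assms by (metis linorder_neqE_nat)
qed

lemma lyndon_rotate_exists:
  fixes w :: "'a::linorder list"
  assumes "w \<noteq> []" and inj: "inj_on (\<lambda>k. rotate k w) {..<length w}"
  obtains k where "k < length w" "lyndon (rotate k w)"
proof -
  let ?R = "(\<lambda>k. rotate k w) ` {..<length w}"
  have "finite ?R" "?R \<noteq> {}" using assms(1) by auto
  then have "Min ?R \<in> ?R" by (rule Min_in)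
  then obtain k where k: "k < length w" "rotate k w = Min ?R" by auto
  have min: "rotate k w \<le> rotate l w" if "l < length w" for l
    using k(2) that by simp
  have "rotate k w < rotate d (rotate k w)" if "0 < d" "d < length w" for d
  proof -
    have "rotate d (rotate k w) = rotate ((d + k) mod length w) w"
      by (metis rotate_conv_mod rotate_rotate)
    moreover have "(d + k) mod length w \<noteq> k"
      using that k(1) by (cases "d + k < length w") (auto simp: mod_if)
    then have "rotate ((d + k) mod length w) w \<noteq> rotate k w"
      using inj_onD[OF inj] k(1) assms(1) by fastforce
    ultimately show ?thesis using min assms(1) by (simp add: order_le_neq_trans)
  qed
  then have "lyndon (rotate k w)" unfolding lyndon_def lex_less_iff_less using assms(1) by simp
  then show ?thesis using k(1) that by blast
qed

lemma periodic_mult: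
  fixes f :: "nat \<Rightarrow> 'a"
  shows "(\<And>x. f (x + a) = f x) \<Longrightarrow> f (x + a * m) = f x"
proof (induction m)
  case (Suc m)
  then show ?case by (metis add.assoc mult_Suc_right add.commute)
qed simp

lemma periodic_gcd:
  fixes f :: "nat \<Rightarrow> 'a"
  assumes "\<And>x. f (x + a) = f x" "\<And>x. f (x + b) = f x" "a \<noteq> 0"
  shows "f (x + gcd a b) = f x"
proof -
  obtain s t where st: "a * s = b * t + gcd a b" using bezout_nat[OF assms(3)] by blast
  have "f (x + gcd a b) = f (x + gcd a b + b * t)" using periodic_mult assms(2) by metis
  also have "\<dots> = f (x + a * s)" using st by (simp add: add.commute add.left_commute)
  also have "\<dots> = f x" using periodic_mult assms(1) by metis
  finally show ?thesis .
qed

definition cyclic_nth :: "'a list \<Rightarrow> nat \<Rightarrow> 'a" where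
  "cyclic_nth u r = u ! (r mod length u)"

lemma cyclic_nth_add_mult_length: "cyclic_nth u (r + length u * m) = cyclic_nth u r"
  by (simp add: cyclic_nth_def)

lemma nth_rotate_eq_cyclic_nth: "t < length u \<Longrightarrow> rotate k u ! t = cyclic_nth u (k + t)"
  by (simp add: cyclic_nth_def nth_rotate)

lemma cyclic_nth_shift_if_rotate_eq:
  assumes "u \<noteq> []" "a \<le> b" "rotate a u = rotate b u"
  shows "cyclic_nth u (x + (b - a)) = cyclic_nth u x"
proof -
  define n where "n = length u"
  have shift: "cyclic_nth u (a + s) = cyclic_nth u (b + s)" for s
  proof -
    have "s mod n < n" using assms(1) by (simp add: n_def)
    then have "cyclic_nth u (a + s mod n) = cyclic_nth u (b + s mod n)"
      using nth_rotate_eq_cyclic_nth assms(3) n_def by metis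
    then show ?thesis by (simp add: cyclic_nth_def n_def mod_add_right_eq)
  qed
  have "a \<le> n * a" using assms(1) by (simp add: n_def Suc_le_eq)
  have "cyclic_nth u (x + (b - a)) = cyclic_nth u (x + (b - a) + n * a)"
    by (simp add: n_def cyclic_nth_add_mult_length)
  also have "x + (b - a) + n * a = b + (x + n * a - a)" using assms(2) \<open>a \<le> n * a\<close> by linarith
  also have "cyclic_nth u \<dots> = cyclic_nth u (a + (x + n * a - a))" by (rule shift[symmetric])
  also have "a + (x + n * a - a) = x + n * a" using \<open>a \<le> n * a\<close> by linarith
  also have "cyclic_nth u \<dots> = cyclic_nth u x" by (simp add: n_def cyclic_nth_add_mult_length)
  finally show ?thesis .
qed

lemma length_substr: "1 \<le> a \<Longrightarrow> b \<le> length S \<Longrightarrow> length (substr S a b) = Suc b - a"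
  by (simp add: substr_def)

lemma nth_substr: "1 \<le> a \<Longrightarrow> b \<le> length S \<Longrightarrow> t < Suc b - a \<Longrightarrow> substr S a b ! t = chr S (a + t)"
  by (simp add: substr_def chr_def add.commute)

lemma length_suffix_at: "length (suffix_at S a) = length S - (a - 1)"
  by (simp add: suffix_at_def)

lemma nth_suffix_at: "1 \<le> a \<Longrightarrow> a + t \<le> length S \<Longrightarrow> suffix_at S a ! t = chr S (a + t)"
  by (simp add: suffix_at_def chr_def add.commute)

lemma substr_eq_take_suffix_at: "substr S a b = take (Suc b - a) (suffix_at S a)"
  by (simp add: substr_def suffix_at_def)

lemma suffix_at_eq_take_append:
  assumes "1 \<le> a" "a \<le> b"
  shows "suffix_at S a = take (b - a) (suffix_at S a) @ suffix_at S b"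
proof -
  have "drop (b - a) (suffix_at S a) = suffix_at S b"
    using assms by (simp add: suffix_at_def)
  then show ?thesis by (metis append_take_drop_id)
qed

lemma drop_substr: "1 \<le> a \<Longrightarrow> drop p (substr S a b) = substr S (a + p) b"
  by (simp add: substr_def drop_take add.commute diff_diff_add)

lemma not_lyndon_substr_if_suffix_at_less:
  fixes S :: "'a::linorder list"
  assumes "1 \<le> k" "0 < p" "k + p \<le> m" "m \<le> length S"
    and less: "suffix_at S (k + p) < suffix_at S k"
  shows "\<not> lyndon (substr S k m)"
proof
  assume lyndon: "lyndon (substr S k m)"
  define w where "w = substr S k m"
  have "length w = Suc m - k" using assms length_substr by (simp add: w_def)
  then have "take p w \<noteq> []" "drop p w \<noteq> []" using assms(2,3) by auto
  then have "w < drop p w" using lyndon_less_proper_suffix[of "take p w" "drop p w"] lyndon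
    by (simp add: w_def)
  moreover have "drop p w < w"
  proof -
    have "take (Suc m - (k + p)) (suffix_at S (k + p)) < take (Suc m - k) (suffix_at S k)"
      using less assms by (intro take_less_take) (auto simp: length_suffix_at)
    moreover have "drop p w = substr S (k + p) m" using assms(1) by (simp add: w_def drop_substr)
    ultimately show ?thesis by (simp add: w_def substr_eq_take_suffix_at)
  qed
  ultimately show False by simp
qed

lemma lyndon_substr_single:
  assumes "1 \<le> k" "k \<le> length S"
  shows "lyndon (substr S k k)"
proof -
  have "length (substr S k k) = 1" using assms by (simp add: length_substr)
  then show ?thesis by (auto simp: lyndon_def)
qed

lemma lyndon_array_eq_iff:
  fixes S :: "'a::linorder list"
  assumes "1 \<le> k" "0 < q" "k + q \<le> Suc (length S)"
    and longer: "\<And>m. k + q \<le> m \<Longrightarrow> m \<le> length S \<Longrightarrow> \<not> lyndon (substr S k m)"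
  shows "lyndon_array S k = q \<longleftrightarrow> lyndon (substr S k (k + q - 1))"
proof -
  define A where "A = {m - k + 1 | m. k \<le> m \<and> m \<le> length S \<and> lyndon (substr S k m)}"
  have "A \<subseteq> (\<lambda>m. m - k + 1) ` {..length S}" unfolding A_def by auto
  then have "finite A" by (rule finite_subset) simp
  moreover have "1 \<in> A"
    unfolding A_def using assms(1-3) lyndon_substr_single[of k S] by (intro CollectI exI[of _ k]) auto
  ultimately have "Max A \<in> A" by (intro Max_in) auto
  have le: "l \<le> q" if l: "l \<in> A" for l
  proof -
    obtain m where "l = m - k + 1" "k \<le> m" "m \<le> length S" "lyndon (substr S k m)"
      using l unfolding A_def by blast
    moreover from this have "m < k + q" using longer by (meson not_less)
    ultimately show ?thesis by simp
  qed
  show ?thesis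
  proof
    assume "lyndon_array S k = q"
    then have "q \<in> A" using \<open>Max A \<in> A\<close> by (simp add: lyndon_array_def A_def)
    then show "lyndon (substr S k (k + q - 1))" unfolding A_def by auto
  next
    assume "lyndon (substr S k (k + q - 1))"
    then have "q \<in> A" unfolding A_def using assms(1-3) by (intro CollectI exI[of _ "k + q - 1"]) auto
    then show "lyndon_array S k = q"
      unfolding lyndon_array_def A_def[symmetric] using \<open>finite A\<close> le by (intro Max_eqI) auto
  qed
qed

(* A run without the maximality conditions, which the argument never uses. *)
locale repetition =
  fixes S :: "'a::linorder list" and i j p :: nat
  assumes start: "1 \<le> i" and stop: "j \<le> length S"
    and period: "is_period S i j p" and square: "2 * p \<le> j - i + 1"
begin

lemma period_pos: "0 < p"
  using period by (simp add: is_period_def)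

lemma chr_add_period: "i \<le> x \<Longrightarrow> x + p \<le> j \<Longrightarrow> chr S (x + p) = chr S x"
  using period by (simp add: is_period_def)

definition period_word :: "'a list" where
  "period_word = substr S i (i + p - 1)"

lemma length_period_word: "length period_word = p"
  using start stop square period_pos by (simp add: period_word_def length_substr)

lemma chr_eq_chr_mod: "i \<le> x \<Longrightarrow> x \<le> j \<Longrightarrow> chr S x = chr S (i + (x - i) mod p)"
proof (induction x rule: less_induct)
  case (less x)
  show ?case
  proof (cases "x < i + p")
    case True
    then show ?thesis using less.prems by simp
  next
    case False
    then have "chr S x = chr S (x - p)" using chr_add_period[of "x - p"] less.prems by simp
    also have "\<dots> = chr S (i + (x - p - i) mod p)" using less False period_pos by simp
    also have "(x - p - i) mod p = (x - i) mod p"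
      using False le_mod_geq[of p "x - i"] by (simp add: add.commute)
    finally show ?thesis .
  qed
qed

lemma chr_eq_cyclic_nth: "i \<le> x \<Longrightarrow> x \<le> j \<Longrightarrow> chr S x = cyclic_nth period_word (x - i)"
proof -
  assume "i \<le> x" "x \<le> j"
  have "(x - i) mod p < p" using period_pos by simp
  then have "period_word ! ((x - i) mod p) = chr S (i + (x - i) mod p)"
    using start stop square by (simp add: period_word_def nth_substr)
  then show ?thesis
    using chr_eq_chr_mod \<open>i \<le> x\<close> \<open>x \<le> j\<close> by (simp add: cyclic_nth_def length_period_word)
qed

lemma substr_eq_rotate_period_word:
  assumes "r < p"
  shows "substr S (i + r) (i + r + p - 1) = rotate r period_word"
proof (rule nth_equalityI)
  have "i + r + p - 1 \<le> j" using square assms by linarith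
  then show "length (substr S (i + r) (i + r + p - 1)) = length (rotate r period_word)"
    using start stop period_pos by (simp add: length_substr length_period_word)
  fix t assume "t < length (substr S (i + r) (i + r + p - 1))"
  then have "t < p" using start stop \<open>i + r + p - 1 \<le> j\<close> by (simp add: length_substr)
  then have "substr S (i + r) (i + r + p - 1) ! t = chr S (i + r + t)"
    using start stop \<open>i + r + p - 1 \<le> j\<close> by (simp add: nth_substr)
  also have "\<dots> = cyclic_nth period_word (r + t)"
    using chr_eq_cyclic_nth \<open>t < p\<close> \<open>i + r + p - 1 \<le> j\<close> by simp
  also have "\<dots> = rotate r period_word ! t"
    using nth_rotate_eq_cyclic_nth[of t period_word r] \<open>t < p\<close> by (simp add: length_period_word)
  finally show "substr S (i + r) (i + r + p - 1) ! t = rotate r period_word ! t" .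
qed

lemma rotate_period_word_distinct:
  assumes smallest: "smallest_period S i j p" and "a < b" "b < p"
  shows "rotate a period_word \<noteq> rotate b period_word"
proof
  assume "rotate a period_word = rotate b period_word"
  moreover have "period_word \<noteq> []" using length_period_word period_pos by auto
  ultimately have shift: "cyclic_nth period_word (x + (b - a)) = cyclic_nth period_word x" for x
    using cyclic_nth_shift_if_rotate_eq[of period_word a b] assms(2) by simp
  have per: "cyclic_nth period_word (x + p) = cyclic_nth period_word x" for x
    using cyclic_nth_add_mult_length[of period_word x 1] by (simp add: length_period_word)
  define g where "g = gcd (b - a) p"
  have shift_g: "cyclic_nth period_word (x + g) = cyclic_nth period_word x" for x
    unfolding g_def using periodic_gcd[OF shift per] assms(2) by simp
  have "0 < g" "g < p" using assms(2,3) by (auto simp: g_def intro: le_less_trans[OF gcd_le1_nat])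
  moreover have "is_period S i j g"
    unfolding is_period_def
  proof (intro conjI allI impI)
    fix x assume x: "i \<le> x \<and> x + g \<le> j"
    then have "chr S (x + g) = cyclic_nth period_word (x - i + g)"
      using chr_eq_cyclic_nth[of "x + g"] by simp
    also have "\<dots> = chr S x" using shift_g[of "x - i"] chr_eq_cyclic_nth[of x] x by simp
    finally show "chr S x = chr S (x + g)" by simp
  qed fact
  ultimately show False using smallest by (simp add: smallest_period_def)
qed

lemma inj_on_rotate_period_word:
  assumes "smallest_period S i j p"
  shows "inj_on (\<lambda>k. rotate k period_word) {..<p}"
  using rotate_period_word_distinct[OF assms] by (intro inj_onI) (metis lessThan_iff linorder_neqE_nat)

lemma take_suffix_at_shift:
  assumes "i \<le> a" "a + l + p \<le> Suc j"
  shows "take l (suffix_at S (a + p)) = take l (suffix_at S a)"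
proof (rule nth_equalityI)
  show "length (take l (suffix_at S (a + p))) = length (take l (suffix_at S a))"
    using assms start stop by (simp add: length_suffix_at)
  fix t assume "t < length (take l (suffix_at S (a + p)))"
  then have "t < l" by simp
  then show "take l (suffix_at S (a + p)) ! t = take l (suffix_at S a) ! t"
    using assms start stop chr_add_period[of "a + t"] by (simp add: nth_suffix_at add.commute add.left_commute)
qed

lemma suffix_at_shift_less:
  assumes decreasing: "suffix_at S (i + p) < suffix_at S i" and "i \<le> k" "k < i + p"
  shows "suffix_at S (k + p) < suffix_at S k"
proof -
  have "i + (k - i) + p \<le> Suc j" using assms(2,3) square by linarith
  then have "take (k - i) (suffix_at S (i + p)) = take (k - i) (suffix_at S i)"
    by (simp add: take_suffix_at_shift)
  moreover have "suffix_at S i = take (k - i) (suffix_at S i) @ suffix_at S k"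
    using start assms(2) by (rule suffix_at_eq_take_append)
  moreover have "suffix_at S (i + p) = take (k - i) (suffix_at S (i + p)) @ suffix_at S (k + p)"
    using start assms(2) suffix_at_eq_take_append[of "i + p" "k + p" S] by simp
  ultimately show ?thesis using decreasing by (metis append_less_append_cancel)
qed

lemma lyndon_array_eq_period_iff:
  assumes decreasing: "suffix_at S (i + p) < suffix_at S i" and "r < p"
  shows "lyndon_array S (i + r) = p \<longleftrightarrow> lyndon (rotate r period_word)"
proof -
  have "lyndon_array S (i + r) = p \<longleftrightarrow> lyndon (substr S (i + r) (i + r + p - 1))"
  proof (rule lyndon_array_eq_iff)
    show "1 \<le> i + r" "0 < p" "i + r + p \<le> Suc (length S)"
      using start stop square period_pos assms(2) by linarith+
    show "\<not> lyndon (substr S (i + r) m)" if "i + r + p \<le> m" "m \<le> length S" for m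
      using that start period_pos suffix_at_shift_less[OF decreasing] assms(2)
      by (intro not_lyndon_substr_if_suffix_at_less) auto
  qed
  then show ?thesis using substr_eq_rotate_period_word assms(2) by simp
qed

end

theorem lemma7:
  fixes S :: "'a::linorder list" and i j p :: nat
  assumes "decreasing_run S i j p"
  shows "\<exists>!i0. i \<le> i0 \<and> i0 < i + p \<and> lyndon_array S i0 = p"
proof -
  have smallest: "smallest_period S i j p" and decreasing: "suffix_at S (i + p) < suffix_at S i"
    and run: "repetition S i j p"
    using assms unfolding decreasing_run_def is_run_def run_props_def smallest_period_def
      repetition_def lex_less_iff_less by auto
  interpret repetition S i j p by (fact run)
  have "period_word \<noteq> []" using length_period_word period_pos by auto
  then obtain r where r: "r < p" "lyndon (rotate r period_word)"
    using lyndon_rotate_exists[of period_word] inj_on_rotate_period_word[OF smallest]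
    by (auto simp: length_period_word)
  show ?thesis
  proof (rule ex1I[of _ "i + r"])
    show "i \<le> i + r \<and> i + r < i + p \<and> lyndon_array S (i + r) = p"
      using r lyndon_array_eq_period_iff[OF decreasing] by simp
    fix k assume k: "i \<le> k \<and> k < i + p \<and> lyndon_array S k = p"
    then have "k - i < p" by linarith
    moreover from this have "lyndon (rotate (k - i) period_word)"
      using k lyndon_array_eq_period_iff[OF decreasing \<open>k - i < p\<close>] by (simp add: le_add_diff_inverse)
    ultimately have "k - i = r" using lyndon_rotate_unique[of "k - i" period_word r] r
      by (simp add: length_period_word)
    then show "k = i + r" using k by linarith
  qed
qed

end
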